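(* Let $\Lambda=(\Lambda_1,\dots,\Lambda_d)$ be a $d$-partition of $\{1,\dots,N\}$ and consider the associated lumped chain. Then $$\mathbb E^\circ\tau^0_0=\prod_{k=1}^d\sqrt{\frac{\pi}{2}|\Lambda_k|}\,\bigl(1+O(|\Lambda_k|^{-1})\bigr).$$
   Context: Let $(\sigma_N(t))_{t\in\mathbb N}$ be the discrete-time simple random walk on $\{-1,1\}^N$ (jump to each Hamming neighbour with probability $1/N$). For a partition $\Lambda$ of $\{1,\dots,N\}$ into nonempty classes $\Lambda_1,\dots,\Lambda_d$, let $\gamma(\sigma)=(\gamma_1(\sigma),\dots,\gamma_d(\sigma))$ with $\gamma_k(\sigma)=|\Lambda_k|^{-1}\sum_{i\in\Lambda_k}\sigma_i$, and $\Gamma_{N,d}=\gamma(\{-1,1\}^N)$. The lumped chain $X_N(t)=\gamma(\sigma_N(t))$ is a Markov chain on $\Gamma_{N,d}$ with transition probabilities $r_N(x,x+s\frac{2}{|\Lambda_k|}u_k)=\frac{|\Lambda_k|}{N}\frac{1-sx_k}{2}$ ($s\in\{-1,1\}$, $u_k$ the canonical basis of $\mathbb R^d$) and reversible invariant measure $\mathbb Q_N(x)=2^{-N}\prod_{k=1}^d\binom{|\Lambda_k|}{|\Lambda_k|(1+x_k)/2}$. $\mathbb P^\circ,\mathbb E^\circ$ refer to the lumped chain; $\tau^x_J=\inf\{t>0:X_N(t)\in J\}$ for the chain started at $x$. The symbol $0$ denotes a fixed point of $\Gamma_{N,d}$ at which $\mathbb Q_N$ attains its maximum (the origin of $\mathbb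 R^d$ when all $|\Lambda_k|$ are even). *)

theory Defs
  imports Complex_Main "HOL-Library.Extended_Nonnegative_Real"
begin

definition is_partition :: "nat \<Rightarrow> nat \<Rightarrow> (nat \<Rightarrow> nat set) \<Rightarrow> bool" where
  "is_partition N d Lam \<longleftrightarrow>
     (\<forall>k<d. Lam k \<noteq> {}) \<and>
     (\<forall>k<d. \<forall>l<d. k \<noteq> l \<longrightarrow> Lam k \<inter> Lam l = {}) \<and>
     (\<Union>k\<in>{..<d}. Lam k) = {1..N}"

text \<open>States of R^d are represented as functions nat => real vanishing at indices >= d.\<close>
definition gamma :: "nat \<Rightarrow> (nat \<Rightarrow> nat set) \<Rightarrow> (nat \<Rightarrow> real) \<Rightarrow> (nat \<Rightarrow> real)" where
  "gamma d Lam \<sigma> = (\<lambda>k. if k < d then (\<Sum>i\<in>Lam k. \<sigma> i) / real (card (Lam k)) else 0)"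

definition Gamma :: "nat \<Rightarrow> nat \<Rightarrow> (nat \<Rightarrow> nat set) \<Rightarrow> (nat \<Rightarrow> real) set" where
  "Gamma N d Lam = gamma d Lam ` {\<sigma>. \<forall>i\<in>{1..N}. \<sigma> i = -1 \<or> \<sigma> i = 1}"

definition lumped_trans :: "nat \<Rightarrow> nat \<Rightarrow> (nat \<Rightarrow> nat set) \<Rightarrow> (nat \<Rightarrow> real) \<Rightarrow> (nat \<Rightarrow> real) \<Rightarrow> real" where
  "lumped_trans N d Lam x y =
     (\<Sum>k<d. \<Sum>s\<in>{-1, 1::real}.
        if y = x(k := x k + s * 2 / real (card (Lam k)))
        then real (card (Lam k)) / real N * (1 - s * x k) / 2 else 0)"

definition QN :: "nat \<Rightarrow> nat \<Rightarrow> (nat \<Rightarrow> nat set) \<Rightarrow> (nat \<Rightarrow> real) \<Rightarrow> real" where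
  "QN N d Lam x = (1/2) ^ N *
     (\<Prod>k<d. real (card (Lam k) choose nat \<lfloor>real (card (Lam k)) * (1 + x k) / 2\<rfloor>))"

text \<open>Generic finite-state Markov chain with kernel P on state space S, started at x.
  taboo P S J x n y = probability that X(n) = y and X(t) \<notin> J for 1 \<le> t \<le> n.\<close>
fun taboo :: "('a \<Rightarrow> 'a \<Rightarrow> real) \<Rightarrow> 'a set \<Rightarrow> 'a set \<Rightarrow> 'a \<Rightarrow> nat \<Rightarrow> 'a \<Rightarrow> real" where
  "taboo P S J x 0 y = (if y = x then 1 else 0)"
| "taboo P S J x (Suc n) y = (if y \<in> J then 0 else (\<Sum>z\<in>S. taboo P S J x n z * P z y))"

text \<open>first_hit P S J x n = P(tau^x_J = n + 1), tau^x_J = inf{t > 0. X(t) \<in> J}.\<close>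
definition first_hit :: "('a \<Rightarrow> 'a \<Rightarrow> real) \<Rightarrow> 'a set \<Rightarrow> 'a set \<Rightarrow> 'a \<Rightarrow> nat \<Rightarrow> real" where
  "first_hit P S J x n = (\<Sum>z\<in>S. taboo P S J x n z * (\<Sum>y\<in>J. P z y))"

text \<open>Expectation of tau^x_J (value infinity on the event tau = infinity).\<close>
definition expected_hit :: "('a \<Rightarrow> 'a \<Rightarrow> real) \<Rightarrow> 'a set \<Rightarrow> 'a set \<Rightarrow> 'a \<Rightarrow> ennreal" where
  "expected_hit P S J x =
     (\<Sum>n. ennreal (real (Suc n) * first_hit P S J x n))
     + \<infinity> * (1 - (\<Sum>n. ennreal (first_hit P S J x n)))"

end

(*
  By Kac's formula, the mean return time of an irreducible finite chain to a state z is 1 / Q z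
  for any stationary law Q. The lumped chain satisfies detailed balance with respect to QN (this
  reduces to (n - j) * (n choose j) = (j + 1) * (n choose (j + 1))), and from every state some
  single flip moves the occupation numbers towards those of z, so the chain is irreducible. At a
  maximiser of QN every class is half full, hence the mean return time is the product over the
  classes of 2^n / (n choose (n div 2)) with n = |Lambda_k|. Finally, Wallis' product traps
  r_m = 4^m / (2m choose m) between pi m <= r_m^2 <= pi (m + 1/2), which gives
  2^n / (n choose (n div 2)) = sqrt (pi n / 2) * (1 + e) with 0 <= e <= 1/n.
*)
theory Submission
  imports Defs "HOL-Analysis.Gamma_Function" "HOL-Real_Asymp.Real_Asymp"
begin

hide_const (open) Gamma_Function.Gamma

section \<open>Central binomial coefficients\<close>

definition wallis_prod :: "nat \<Rightarrow> real" where
  "wallis_prod m = (\<Prod>k=1..m. 4 * real k ^ 2 / (4 * real k ^ 2 - 1))"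

definition central_ratio :: "nat \<Rightarrow> real" where
  "central_ratio m = 4 ^ m / real (2 * m choose m)"

lemma wallis_factor_ge_1: "1 \<le> 4 * (real m + 1) ^ 2 / (4 * (real m + 1) ^ 2 - 1)"
proof -
  define x where "x = 4 * (real m + 1) ^ 2"
  have "4 \<le> x" unfolding x_def by simp
  then show ?thesis unfolding x_def[symmetric] by (simp add: le_divide_eq)
qed

lemma wallis_prod_Suc:
  "wallis_prod (Suc m) = wallis_prod m * (4 * (real m + 1) ^ 2 / (4 * (real m + 1) ^ 2 - 1))"
  unfolding wallis_prod_def by (simp add: prod.nat_ivl_Suc' add_ac)

lemma wallis_prod_Suc_mult:
  "wallis_prod (Suc m) * ((2 * real m + 1) * (2 * real m + 3)) = wallis_prod m * (2 * real m + 2) ^ 2"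
proof -
  have "4 * (real m + 1) ^ 2 - 1 = (2 * real m + 1) * (2 * real m + 3)"
    and "4 * (real m + 1) ^ 2 = (2 * real m + 2) ^ 2"
    by (simp_all add: algebra_simps power2_eq_square)
  moreover have "(2 * real m + 1) * (2 * real m + 3) > 0" by simp
  ultimately show ?thesis unfolding wallis_prod_Suc by simp
qed

lemma wallis_prod_ge_1: "wallis_prod m \<ge> 1"
proof (induction m)
  case (Suc m)
  then show ?case
    unfolding wallis_prod_Suc using wallis_factor_ge_1[of m] by (metis mult_mono' mult_1 zero_le_one)
qed (simp add: wallis_prod_def)

lemma incseq_wallis_prod: "incseq wallis_prod"
proof (rule incseq_SucI)
  fix m
  show "wallis_prod m \<le> wallis_prod (Suc m)"
    unfolding wallis_prod_Suc using mult_left_mono[OF wallis_factor_ge_1, of "wallis_prod m" m]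
      wallis_prod_ge_1[of m] by simp
qed

lemma wallis_prod_le: "wallis_prod m \<le> pi / 2"
  using incseq_wallis_prod wallis[folded wallis_prod_def] by (rule incseq_le)

lemma central_binomial_Suc_double: "2 * Suc m choose Suc m = 2 * (Suc (2 * m) choose m)"
  using binomial_Suc_Suc[of "Suc (2 * m)" m] central_binomial_odd[of "Suc (2 * m)"] by simp

lemma central_binomial_Suc:
  "Suc m * (2 * Suc m choose Suc m) = 2 * (2 * m + 1) * (2 * m choose m)"
proof -
  have "Suc m * (Suc (2 * m) choose m) = Suc (2 * m) * (2 * m choose m)"
    using Suc_times_binomial_eq[of "2 * m" m] central_binomial_odd[of "Suc (2 * m)"] by simp
  then show ?thesis unfolding central_binomial_Suc_double by simp
qed

lemma central_ratio_Suc: "central_ratio (Suc m) = central_ratio m * (2 * real m + 2) / (2 * real m + 1)"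
proof -
  define c where "c = real (2 * m choose m)"
  define c' where "c' = real (2 * Suc m choose Suc m)"
  have "(real m + 1) * c' = 2 * (2 * real m + 1) * c"
    using arg_cong[OF central_binomial_Suc[of m], of real] unfolding c_def c'_def
    by (simp only: of_nat_mult of_nat_Suc of_nat_add of_nat_numeral of_nat_1) (simp add: algebra_simps)
  moreover have "c > 0" "c' > 0" unfolding c_def c'_def by (simp_all del: binomial_Suc_Suc)
  ultimately show ?thesis unfolding central_ratio_def c_def[symmetric] c'_def[symmetric]
    by (simp add: divide_simps) (simp add: algebra_simps)
qed

lemma central_ratio_sq: "central_ratio m ^ 2 = (2 * real m + 1) * wallis_prod m"
proof (induction m)
  case 0
  then show ?case by (simp add: central_ratio_def wallis_prod_def)
next
  case (Suc m)
  have "central_ratio (Suc m) ^ 2 * (2 * real m + 1) ^ 2 = (2 * real m + 1) * (wallis_prod m * (2 * real m + 2) ^ 2)"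
    unfolding central_ratio_Suc power_mult_distrib power_divide Suc.IH by simp
  also have "\<dots> = (2 * real (Suc m) + 1) * wallis_prod (Suc m) * (2 * real m + 1) ^ 2"
    unfolding wallis_prod_Suc_mult[symmetric] by (simp add: algebra_simps power2_eq_square)
  finally show ?case by simp
qed

lemma central_ratio_sq_le: "central_ratio m ^ 2 \<le> pi * (real m + 1 / 2)"
  using mult_left_mono[OF wallis_prod_le, of "2 * real m + 1" m]
  by (simp add: central_ratio_sq algebra_simps)

lemma central_ratio_sq_ge:
  assumes "m \<ge> 1"
  shows "pi * real m \<le> central_ratio m ^ 2"
proof -
  \<comment> \<open>g k = central_ratio (Suc k) ^ 2 / (k + 1), which decreases to pi\<close>
  define g where "g k = (2 * real k + 3) / (real k + 1) * wallis_prod (Suc k)" for k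
  have "decseq g"
  proof (rule decseq_SucI)
    fix k
    have "g (Suc k) = 4 * (real k + 2) / (2 * real k + 3) * wallis_prod (Suc k)"
      using wallis_prod_Suc_mult[of "Suc k"] unfolding g_def by (simp add: field_simps power2_eq_square)
    also have "\<dots> \<le> g k"
      unfolding g_def using wallis_prod_ge_1[of "Suc k"]
      by (intro mult_right_mono) (simp_all add: field_simps power2_eq_square)
    finally show "g (Suc k) \<le> g k" .
  qed
  moreover have "g \<longlonglongrightarrow> 2 * (pi / 2)"
  proof -
    have "(\<lambda>k. (2 * real k + 3) / (real k + 1)) \<longlonglongrightarrow> 2" by real_asymp
    then show ?thesis
      unfolding g_def using LIMSEQ_Suc[OF wallis[folded wallis_prod_def]] by (rule tendsto_mult)
  qed
  ultimately have "pi \<le> g (m - 1)" using decseq_ge by fastforce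
  then show ?thesis using assms unfolding g_def central_ratio_sq by (simp add: field_simps)
qed

lemma two_power_div_central_binomial: "2 ^ n / real (n choose (n div 2)) = central_ratio ((n + 1) div 2)"
proof (cases "even n")
  case True
  then obtain m where "n = 2 * m" by auto
  then show ?thesis by (simp add: central_ratio_def power_mult)
next
  case False
  then obtain m where n: "n = Suc (2 * m)" using oddE by fastforce
  then have "central_ratio ((n + 1) div 2) = 4 ^ Suc m / real (2 * Suc m choose Suc m)"
    unfolding central_ratio_def by (simp del: binomial_Suc_Suc)
  also have "\<dots> = 2 ^ n / real (n choose (n div 2))"
    unfolding central_binomial_Suc_double n by (simp add: power_mult)
  finally show ?thesis ..
qed

lemma two_power_div_central_binomial_asymp:
  assumes "n \<ge> 1"
  shows "\<exists>e. \<bar>e\<bar> \<le> 1 / real n \<and> 2 ^ n / real (n choose (n div 2)) = sqrt (pi / 2 * real n) * (1 + e)"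
proof -
  define p where "p = (n + 1) div 2"
  define s where "s = sqrt (pi / 2 * real n)"
  have p: "p \<ge> 1" "real n \<le> 2 * real p" "2 * real p \<le> real n + 1"
    unfolding p_def using assms by linarith+
  have s: "s > 0" "s ^ 2 = pi / 2 * real n"
    unfolding s_def using assms by simp_all
  have R: "central_ratio p > 0"
    unfolding central_ratio_def by simp
  have "s ^ 2 \<le> pi * real p"
    unfolding s(2) using mult_left_mono[OF p(2), of "pi / 2"] by simp
  also have "\<dots> \<le> central_ratio p ^ 2"
    by (rule central_ratio_sq_ge[OF p(1)])
  finally have lower: "s \<le> central_ratio p"
    by (rule power2_le_imp_le) (use R in simp)
  have "central_ratio p ^ 2 \<le> pi * (real p + 1 / 2)"
    by (rule central_ratio_sq_le)
  also have "\<dots> \<le> pi * (real n / 2 + 1)"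
    using p(3) by (intro mult_left_mono) simp_all
  also have "\<dots> = s ^ 2 * (1 + 2 / real n)"
    unfolding s(2) using assms by (simp add: field_simps)
  also have "\<dots> \<le> s ^ 2 * (1 + 1 / real n) ^ 2"
    by (intro mult_left_mono) (simp_all add: power2_eq_square algebra_simps)
  also have "\<dots> = (s * (1 + 1 / real n)) ^ 2"
    by (simp add: power_mult_distrib)
  finally have upper: "central_ratio p \<le> s * (1 + 1 / real n)"
    by (rule power2_le_imp_le) (use s(1) in simp)
  define e where "e = central_ratio p / s - 1"
  have "\<bar>e\<bar> \<le> 1 / real n"
    unfolding e_def using lower upper s(1) by (simp add: field_simps)
  moreover have "central_ratio p = s * (1 + e)"
    unfolding e_def using s(1) by simp
  ultimately show ?thesis
    unfolding two_power_div_central_binomial p_def[symmetric] s_def[symmetric] by blast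
qed

section \<open>Kac's formula for finite Markov chains\<close>

lemma decseq_summable_mult_LIMSEQ_0:
  fixes T :: "nat \<Rightarrow> real"
  assumes dec: "decseq T" and nonneg: "\<And>n. T n \<ge> 0" and "summable T"
  shows "(\<lambda>n. real n * T n) \<longlonglongrightarrow> 0"
  unfolding LIMSEQ_iff
proof (intro allI impI)
  fix r :: real
  assume "r > 0"
  then obtain M where M: "\<And>m n. m \<ge> M \<Longrightarrow> norm (sum T {m..<n}) < r / 2"
    using \<open>summable T\<close>[unfolded summable_Cauchy] by (meson half_gt_zero)
  show "\<exists>n0. \<forall>n\<ge>n0. norm (real n * T n - 0) < r"
  proof (intro exI allI impI)
    fix n
    assume "n \<ge> 2 * M"
    then have "n div 2 \<ge> M" by simp
    \<comment> \<open>each of the terms T i with n div 2 \<le> i < n dominates T n\<close>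
    have "real (n - n div 2) * T n = (\<Sum>i\<in>{n div 2..<n}. T n)" by simp
    also have "\<dots> \<le> (\<Sum>i\<in>{n div 2..<n}. T i)"
      using dec by (intro sum_mono) (simp add: decseq_def)
    also have "\<dots> < r / 2"
      using M[OF \<open>n div 2 \<ge> M\<close>, of n] by simp
    finally have "real (n - n div 2) * T n < r / 2" .
    moreover have "real n * T n \<le> 2 * (real (n - n div 2) * T n)"
      unfolding mult.assoc[symmetric] using nonneg[of n] by (intro mult_right_mono) linarith+
    ultimately show "norm (real n * T n - 0) < r"
      using nonneg[of n] by simp
  qed
qed

lemma sums_Suc_mult_decrements:
  fixes T :: "nat \<Rightarrow> real"
  assumes dec: "decseq T" and nonneg: "\<And>n. T n \<ge> 0" and sums: "T sums s"
  shows "(\<lambda>n. real (Suc n) * (T n - T (Suc n))) sums s"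
proof -
  have partial: "(\<Sum>i<m. real (Suc i) * (T i - T (Suc i))) = (\<Sum>i<m. T i) - real m * T m" for m
    by (induction m) (simp_all add: algebra_simps)
  have "(\<lambda>m. (\<Sum>i<m. T i) - real m * T m) \<longlonglongrightarrow> s - 0"
    using sums decseq_summable_mult_LIMSEQ_0[OF dec nonneg sums_summable[OF sums]]
    unfolding sums_def by (rule tendsto_diff)
  then show ?thesis
    unfolding sums_def partial by simp
qed

locale finite_markov_chain =
  fixes S :: "'a set" and P :: "'a \<Rightarrow> 'a \<Rightarrow> real"
  assumes finite_S: "finite S"
    and P_nonneg: "x \<in> S \<Longrightarrow> y \<in> S \<Longrightarrow> P x y \<ge> 0"
    and P_row_sum: "x \<in> S \<Longrightarrow> (\<Sum>y\<in>S. P x y) = 1"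
begin

lemma taboo_nonneg: "y \<in> S \<Longrightarrow> taboo P S J x n y \<ge> 0"
  by (induction n arbitrary: y) (auto intro!: sum_nonneg mult_nonneg_nonneg P_nonneg)

lemma first_hit_nonneg: "J \<subseteq> S \<Longrightarrow> first_hit P S J x n \<ge> 0"
  unfolding first_hit_def
  by (auto intro!: sum_nonneg mult_nonneg_nonneg taboo_nonneg P_nonneg)

lemma taboo_Suc_0: "x \<in> S \<Longrightarrow> taboo P S J x (Suc 0) y = (if y \<in> J then 0 else P x y)"
proof -
  assume "x \<in> S"
  have "(\<Sum>w\<in>S. (if w = x then 1 else 0) * P w y) = (\<Sum>w\<in>S. if w = x then P x y else 0)"
    by (intro sum.cong) auto
  then show ?thesis
    using finite_S \<open>x \<in> S\<close> by simp
qed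

lemma taboo_Suc_first_step:
  assumes "x \<in> S" "y \<in> S"
  shows "taboo P S {z} x (Suc n) y = (\<Sum>w\<in>S-{z}. P x w * taboo P S {z} w n y)"
  using \<open>y \<in> S\<close>
proof (induction n arbitrary: y)
  case 0
  have "(\<Sum>w\<in>S-{z}. P x w * (if y = w then 1 else 0)) = (\<Sum>w\<in>S-{z}. if w = y then P x y else 0)"
    by (intro sum.cong) auto
  then show ?case
    unfolding taboo_Suc_0[OF \<open>x \<in> S\<close>] using finite_S 0 by simp
next
  case (Suc n)
  have "(\<Sum>u\<in>S. (\<Sum>w\<in>S-{z}. P x w * taboo P S {z} w n u) * P u y)
      = (\<Sum>w\<in>S-{z}. P x w * (\<Sum>u\<in>S. taboo P S {z} w n u * P u y))"
    unfolding sum_distrib_left sum_distrib_right mult.assoc by (rule sum.swap)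
  then show ?case
    using Suc.IH by (simp cong: sum.cong)
qed

text \<open>survival z n x is the probability that tau^x_z > n.\<close>
definition survival :: "'a \<Rightarrow> nat \<Rightarrow> 'a \<Rightarrow> real" where
  "survival z n x = (\<Sum>y\<in>S. taboo P S {z} x n y)"

lemma survival_0: "x \<in> S \<Longrightarrow> survival z 0 x = 1"
  unfolding survival_def using finite_S by simp

lemma survival_nonneg: "survival z n x \<ge> 0"
  unfolding survival_def by (intro sum_nonneg taboo_nonneg)

lemma survival_Suc:
  assumes "z \<in> S"
  shows "survival z (Suc n) x = survival z n x - first_hit P S {z} x n"
proof -
  have "survival z (Suc n) x = (\<Sum>y\<in>S. \<Sum>w\<in>S. taboo P S {z} x n w * P w y)
      - (\<Sum>w\<in>S. taboo P S {z} x n w * P w z)"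
    unfolding survival_def using finite_S assms
    by (simp add: sum.remove[of S z] if_distrib cong: if_cong)
  also have "(\<Sum>y\<in>S. \<Sum>w\<in>S. taboo P S {z} x n w * P w y) = survival z n x"
    unfolding survival_def sum_distrib_left[symmetric] sum.swap[of _ S S]
    by (simp add: P_row_sum flip: sum_distrib_left)
  finally show ?thesis unfolding first_hit_def by simp
qed

lemma survival_Suc_first_step:
  assumes "x \<in> S"
  shows "survival z (Suc n) x = (\<Sum>w\<in>S-{z}. P x w * survival z n w)"
proof -
  have "survival z (Suc n) x = (\<Sum>y\<in>S. \<Sum>w\<in>S-{z}. P x w * taboo P S {z} w n y)"
    unfolding survival_def using assms by (intro sum.cong refl taboo_Suc_first_step)
  also have "\<dots> = (\<Sum>w\<in>S-{z}. P x w * survival z n w)"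
    unfolding survival_def sum_distrib_left by (rule sum.swap)
  finally show ?thesis .
qed

lemma decseq_survival: "z \<in> S \<Longrightarrow> decseq (\<lambda>n. survival z n x)"
  by (rule decseq_SucI) (simp add: survival_Suc first_hit_nonneg)

lemma harmonic_at_maximum:
  assumes "z \<in> S" and harmonic: "\<And>x. x \<in> S \<Longrightarrow> v x = (\<Sum>w\<in>S-{z}. P x w * v w)"
    and "x \<in> S" and max: "\<And>w. w \<in> S \<Longrightarrow> v w \<le> v x" and "v x > 0"
  shows "P x z = 0" and "\<And>w. w \<in> S - {z} \<Longrightarrow> P x w > 0 \<Longrightarrow> v w = v x"
proof -
  have terms_nonneg: "w \<in> S - {z} \<Longrightarrow> P x w * (v x - v w) \<ge> 0" for w
    using P_nonneg[OF \<open>x \<in> S\<close>, of w] max[of w] by simp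
  have "(\<Sum>w\<in>S-{z}. P x w) = 1 - P x z"
    using sum.remove[OF finite_S \<open>z \<in> S\<close>, of "P x"] P_row_sum[OF \<open>x \<in> S\<close>] by simp
  have "(\<Sum>w\<in>S-{z}. P x w * (v x - v w)) = v x * (\<Sum>w\<in>S-{z}. P x w) - (\<Sum>w\<in>S-{z}. P x w * v w)"
    by (simp add: algebra_simps sum_subtractf sum_distrib_left)
  also have "\<dots> = v x * (1 - P x z) - v x"
    unfolding \<open>(\<Sum>w\<in>S-{z}. P x w) = 1 - P x z\<close> harmonic[OF \<open>x \<in> S\<close>, symmetric] ..
  finally have sum_eq: "(\<Sum>w\<in>S-{z}. P x w * (v x - v w)) = - v x * P x z"
    by (simp add: algebra_simps)
  moreover have "(\<Sum>w\<in>S-{z}. P x w * (v x - v w)) \<ge> 0"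
    using terms_nonneg by (rule sum_nonneg)
  moreover have "P x z \<ge> 0"
    using P_nonneg \<open>x \<in> S\<close> \<open>z \<in> S\<close> by simp
  ultimately show Pxz: "P x z = 0"
    using \<open>v x > 0\<close> by (simp add: mult_le_0_iff)
  fix w
  assume "w \<in> S - {z}" "P x w > 0"
  have "finite (S - {z})"
    using finite_S by simp
  moreover have "(\<Sum>w\<in>S-{z}. P x w * (v x - v w)) = 0"
    using sum_eq Pxz by simp
  ultimately have "\<forall>w\<in>S-{z}. P x w * (v x - v w) = 0"
    using sum_nonneg_eq_0_iff[of "S - {z}" "\<lambda>w. P x w * (v x - v w)"] terms_nonneg by blast
  then show "v w = v x"
    using \<open>w \<in> S - {z}\<close> \<open>P x w > 0\<close> by force
qed

definition accessible :: "'a \<Rightarrow> 'a \<Rightarrow> bool" where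
  "accessible x z \<longleftrightarrow> (x, z) \<in> {(u, w). u \<in> S \<and> w \<in> S \<and> P u w > 0}\<^sup>*"

lemma accessible_by_descent:
  fixes \<phi> :: "'a \<Rightarrow> nat"
  assumes descent: "\<And>x. x \<in> S \<Longrightarrow> x \<noteq> z \<Longrightarrow> \<exists>y\<in>S. P x y > 0 \<and> \<phi> y < \<phi> x"
    and "x \<in> S"
  shows "accessible x z"
  using \<open>x \<in> S\<close>
proof (induction x rule: measure_induct_rule[of \<phi>])
  case (less x)
  show ?case
  proof (cases "x = z")
    case False
    then obtain y where "y \<in> S" "P x y > 0" "\<phi> y < \<phi> x"
      using descent less.prems by blast
    then show ?thesis
      using less.IH[of y] less.prems unfolding accessible_def
      by (auto intro: converse_rtrancl_into_rtrancl)
  qed (simp add: accessible_def)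
qed

lemma harmonic_off_target_eq_0:
  assumes "z \<in> S" and accessible: "\<And>x. x \<in> S \<Longrightarrow> accessible x z"
    and nonneg: "\<And>x. x \<in> S \<Longrightarrow> v x \<ge> 0"
    and harmonic: "\<And>x. x \<in> S \<Longrightarrow> v x = (\<Sum>w\<in>S-{z}. P x w * v w)"
    and "x \<in> S"
  shows "v x = 0"
proof (rule ccontr)
  assume "v x \<noteq> 0"
  define M where "M = Max (v ` S)"
  have le_M: "w \<in> S \<Longrightarrow> v w \<le> M" for w
    unfolding M_def using finite_S by simp
  have "M > 0"
    using le_M[OF \<open>x \<in> S\<close>] nonneg[OF \<open>x \<in> S\<close>] \<open>v x \<noteq> 0\<close> by simp
  have at_max: "P w z = 0" "\<And>y. y \<in> S - {z} \<Longrightarrow> P w y > 0 \<Longrightarrow> v y = M"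
    if "w \<in> S" "v w = M" for w
  proof -
    have "\<And>u. u \<in> S \<Longrightarrow> v u \<le> v w" "v w > 0"
      using le_M \<open>M > 0\<close> \<open>v w = M\<close> by simp_all
    from harmonic_at_maximum[OF \<open>z \<in> S\<close> harmonic \<open>w \<in> S\<close> this]
    show "P w z = 0" "\<And>y. y \<in> S - {z} \<Longrightarrow> P w y > 0 \<Longrightarrow> v y = M"
      using \<open>v w = M\<close> by simp_all
  qed
  \<comment> \<open>the maximum propagates along positive transitions, but can never step into z\<close>
  have max_at_z: "w = z" if "accessible w z" "v w = M" for w
    using that unfolding accessible_def
  proof (induction rule: converse_rtrancl_induct)
    case (step w y)
    have "w \<in> S" "y \<in> S" "P w y > 0"
      using step.hyps(1) by simp_all
    then have "y \<noteq> z"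
      using at_max(1)[OF \<open>w \<in> S\<close> step.prems] by auto
    then have "v y = M"
      using at_max(2)[OF \<open>w \<in> S\<close> step.prems] \<open>y \<in> S\<close> \<open>P w y > 0\<close> by simp
    then show ?case
      using step.IH \<open>y \<noteq> z\<close> by simp
  qed simp
  have "M \<in> v ` S"
    unfolding M_def using finite_S \<open>x \<in> S\<close> by (intro Max_in) auto
  then have "v z = M"
    using max_at_z accessible by auto
  have "\<exists>y\<in>S. P z y > 0"
  proof (rule ccontr)
    assume "\<not> (\<exists>y\<in>S. P z y > 0)"
    then have "(\<Sum>y\<in>S. P z y) \<le> 0"
      by (intro sum_nonpos) (simp add: not_less)
    then show False
      using P_row_sum[OF \<open>z \<in> S\<close>] by simp
  qed
  then obtain y where y: "y \<in> S" "P z y > 0" ..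
  have "y \<noteq> z"
    using at_max(1)[OF \<open>z \<in> S\<close> \<open>v z = M\<close>] y(2) by auto
  then have "v y = M"
    using at_max(2)[OF \<open>z \<in> S\<close> \<open>v z = M\<close>] y by simp
  then show False
    using max_at_z[OF accessible[OF y(1)]] \<open>y \<noteq> z\<close> by blast
qed

lemma survival_LIMSEQ_0:
  assumes "z \<in> S" and accessible: "\<And>x. x \<in> S \<Longrightarrow> accessible x z"
    and "x \<in> S"
  shows "(\<lambda>n. survival z n x) \<longlonglongrightarrow> 0"
proof -
  define v where "v x = lim (\<lambda>n. survival z n x)" for x
  have v: "(\<lambda>n. survival z n x) \<longlonglongrightarrow> v x" for x
  proof -
    obtain L where "(\<lambda>n. survival z n x) \<longlonglongrightarrow> L"
      by (rule decseq_convergent[OF decseq_survival[OF \<open>z \<in> S\<close>], of 0]) (auto simp: survival_nonneg)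
    then show ?thesis
      unfolding v_def by (simp add: limI)
  qed
  have "v x = (\<Sum>w\<in>S-{z}. P x w * v w)" if "x \<in> S" for x
  proof (rule LIMSEQ_unique)
    show "(\<lambda>n. survival z (Suc n) x) \<longlonglongrightarrow> v x"
      using v by (rule LIMSEQ_Suc)
    show "(\<lambda>n. survival z (Suc n) x) \<longlonglongrightarrow> (\<Sum>w\<in>S-{z}. P x w * v w)"
      unfolding survival_Suc_first_step[OF that] by (intro tendsto_intros v)
  qed
  moreover have "v x \<ge> 0" for x
    by (rule LIMSEQ_le_const[OF v]) (auto simp: survival_nonneg)
  ultimately have "v x = 0"
    using harmonic_off_target_eq_0[OF \<open>z \<in> S\<close> accessible] \<open>x \<in> S\<close> by blast
  then show ?thesis
    using v[of x] by simp
qed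

end

locale stationary_markov_chain = finite_markov_chain +
  fixes Q :: "'a \<Rightarrow> real"
  assumes Q_sum: "(\<Sum>x\<in>S. Q x) = 1"
    and Q_stationary: "y \<in> S \<Longrightarrow> (\<Sum>x\<in>S. Q x * P x y) = Q y"
begin

text \<open>By stationarity the left-hand side is also the probability, started from Q, that
  X(2), ..., X(n+1) avoid z and X(n+1) = y; the two terms split this on whether X(1) = z.\<close>
lemma stationary_taboo_Suc:
  assumes "z \<in> S" "y \<in> S"
  shows "(\<Sum>x\<in>S. Q x * taboo P S {z} x n y)
    = Q z * taboo P S {z} z n y + (\<Sum>x\<in>S. Q x * taboo P S {z} x (Suc n) y)"
proof -
  define c where "c m w = (\<Sum>x\<in>S. Q x * taboo P S {z} x m w)" for m w
  have c_0: "c 0 w = Q w" if "w \<in> S" for w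
    unfolding c_def using finite_S that by (simp add: if_distrib cong: if_cong)
  have c_Suc: "c (Suc m) w = (if w = z then 0 else (\<Sum>u\<in>S. c m u * P u w))" for m w
  proof -
    have "(\<Sum>x\<in>S. Q x * (\<Sum>u\<in>S. taboo P S {z} x m u * P u w))
        = (\<Sum>u\<in>S. (\<Sum>x\<in>S. Q x * taboo P S {z} x m u) * P u w)"
      unfolding sum_distrib_left sum_distrib_right mult.assoc by (rule sum.swap)
    then show ?thesis
      unfolding c_def by simp
  qed
  have "c n y = Q z * taboo P S {z} z n y + c (Suc n) y"
    using \<open>y \<in> S\<close>
  proof (induction n arbitrary: y)
    case 0
    have "(\<Sum>u\<in>S. c 0 u * P u y) = Q y"
      using Q_stationary[OF 0] by (simp add: c_0 cong: sum.cong)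
    then show ?case
      using c_0[OF 0] c_Suc[of 0 y] by simp
  next
    case (Suc n)
    have "c (Suc n) y = (if y = z then 0 else \<Sum>u\<in>S. c n u * P u y)"
      by (rule c_Suc)
    also have "\<dots> = (if y = z then 0 else \<Sum>u\<in>S. (Q z * taboo P S {z} z n u + c (Suc n) u) * P u y)"
      using Suc.IH by (simp cong: sum.cong)
    also have "\<dots> = Q z * taboo P S {z} z (Suc n) y + c (Suc (Suc n)) y"
      unfolding c_Suc[of "Suc n"] by (simp add: distrib_right sum.distrib sum_distrib_left mult.assoc)
    finally show ?case .
  qed
  then show ?thesis
    unfolding c_def .
qed

lemma stationary_survival_Suc:
  assumes "z \<in> S"
  shows "(\<Sum>x\<in>S. Q x * survival z n x)
    = Q z * survival z n z + (\<Sum>x\<in>S. Q x * survival z (Suc n) x)"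
proof -
  have swap: "(\<Sum>x\<in>S. Q x * survival z m x) = (\<Sum>y\<in>S. \<Sum>x\<in>S. Q x * taboo P S {z} x m y)" for m
    unfolding survival_def sum_distrib_left by (rule sum.swap)
  have "(\<Sum>y\<in>S. \<Sum>x\<in>S. Q x * taboo P S {z} x n y)
      = (\<Sum>y\<in>S. Q z * taboo P S {z} z n y + (\<Sum>x\<in>S. Q x * taboo P S {z} x (Suc n) y))"
    using assms by (intro sum.cong refl stationary_taboo_Suc)
  also have "\<dots> = Q z * survival z n z + (\<Sum>y\<in>S. \<Sum>x\<in>S. Q x * taboo P S {z} x (Suc n) y)"
    unfolding survival_def sum.distrib sum_distrib_left ..
  finally show ?thesis
    unfolding swap .
qed

lemma survival_at_target_sums:
  assumes "z \<in> S" and "Q z > 0" and accessible: "\<And>x. x \<in> S \<Longrightarrow> accessible x z"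
  shows "(\<lambda>n. survival z n z) sums (1 / Q z)"
proof -
  define B where "B n = (\<Sum>x\<in>S. Q x * survival z n x)" for n
  have B_Suc: "B m = Q z * survival z m z + B (Suc m)" for m
    unfolding B_def by (rule stationary_survival_Suc[OF \<open>z \<in> S\<close>])
  have "B 0 = 1"
    unfolding B_def using Q_sum by (simp add: survival_0 cong: sum.cong)
  have "Q z * (\<Sum>i<m. survival z i z) = 1 - B m" for m
  proof (induction m)
    case 0
    then show ?case using \<open>B 0 = 1\<close> by simp
  next
    case (Suc m)
    then show ?case using B_Suc[of m] by (simp add: algebra_simps)
  qed
  then have partial: "(\<Sum>i<m. survival z i z) = (1 - B m) / Q z" for m
    using \<open>Q z > 0\<close> by (simp add: field_simps)
  have "B \<longlonglongrightarrow> (\<Sum>x\<in>S. Q x * 0)"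
    unfolding B_def using survival_LIMSEQ_0[OF \<open>z \<in> S\<close> accessible]
    by (intro tendsto_sum tendsto_mult_left) simp
  then have "(\<lambda>m. (1 - B m) / Q z) \<longlonglongrightarrow> (1 - 0) / Q z"
    using \<open>Q z > 0\<close> by (intro tendsto_intros) simp_all
  then show ?thesis
    unfolding sums_def partial by simp
qed

theorem kac_formula:
  assumes "z \<in> S" and "Q z > 0" and accessible: "\<And>x. x \<in> S \<Longrightarrow> accessible x z"
  shows "expected_hit P S {z} z = ennreal (1 / Q z)"
proof -
  define T where "T = (\<lambda>n. survival z n z)"
  have first_hit_eq: "first_hit P S {z} z n = T n - T (Suc n)" for n
    unfolding T_def survival_Suc[OF \<open>z \<in> S\<close>] by simp
  have T_sums: "T sums (1 / Q z)"
    unfolding T_def by (rule survival_at_target_sums[OF assms])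
  have "(\<lambda>n. real (Suc n) * first_hit P S {z} z n) sums (1 / Q z)"
    unfolding first_hit_eq using T_sums
    by (intro sums_Suc_mult_decrements) (simp_all add: T_def decseq_survival[OF \<open>z \<in> S\<close>] survival_nonneg)
  then have mean: "(\<Sum>n. ennreal (real (Suc n) * first_hit P S {z} z n)) = ennreal (1 / Q z)"
    using first_hit_nonneg \<open>z \<in> S\<close> by (intro suminf_ennreal_eq) simp_all
  have "(\<lambda>n. first_hit P S {z} z n) sums (T 0 - 0)"
    unfolding first_hit_eq using T_sums by (intro telescope_sums' summable_LIMSEQ_zero sums_summable)
  then have total: "(\<Sum>n. ennreal (first_hit P S {z} z n)) = 1"
    using first_hit_nonneg \<open>z \<in> S\<close> survival_0[OF \<open>z \<in> S\<close>]
    by (subst suminf_ennreal_eq) (simp_all add: T_def)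
  show ?thesis
    unfolding expected_hit_def mean total by simp
qed

end

section \<open>The lumped chain\<close>

lemma sum_plus_minus_one:
  assumes "finite L" and "\<forall>i\<in>L. \<sigma> i = -1 \<or> \<sigma> i = (1::real)"
  shows "(\<Sum>i\<in>L. \<sigma> i) = 2 * real (card {i\<in>L. \<sigma> i = 1}) - real (card L)"
proof -
  define A where "A = {i\<in>L. \<sigma> i = 1}"
  have "A \<subseteq> L" "finite A"
    unfolding A_def using assms(1) by auto
  have "(\<Sum>i\<in>L. \<sigma> i) = (\<Sum>i\<in>L-A. \<sigma> i) + (\<Sum>i\<in>A. \<sigma> i)"
    using \<open>A \<subseteq> L\<close> assms(1) by (rule sum.subset_diff)
  also have "(\<Sum>i\<in>L-A. \<sigma> i) = (\<Sum>i\<in>L-A. -1)"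
    using assms(2) unfolding A_def by (intro sum.cong) auto
  also have "(\<Sum>i\<in>A. \<sigma> i) = real (card A)"
    unfolding A_def by simp
  also have "(\<Sum>i\<in>L-A. -1) = - real (card L - card A)"
    by (simp add: card_Diff_subset[OF \<open>finite A\<close> \<open>A \<subseteq> L\<close>])
  finally show ?thesis
    using card_mono[OF assms(1) \<open>A \<subseteq> L\<close>] unfolding A_def[symmetric] by (simp add: of_nat_diff)
qed

lemma binomial_Suc_balance:
  "real (n choose j) * (real n - real j) = real (n choose Suc j) * real (Suc j)"
proof (cases "j < n")
  case True
  have "(n - j) * (n choose j) = Suc j * (n choose Suc j)"
    using binomial_absorb_comp[of n j] binomial_absorption[of j n] by simp
  then have "real ((n - j) * (n choose j)) = real (Suc j * (n choose Suc j))"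
    by (simp only:)
  then show ?thesis
    using True by (simp add: of_nat_diff algebra_simps)
next
  case False
  then show ?thesis
    by (cases "j = n") (simp_all add: binomial_eq_0)
qed

locale lumped_chain =
  fixes N d :: nat and Lam :: "nat \<Rightarrow> nat set"
  assumes partition: "is_partition N d Lam" and d_pos: "d \<ge> 1"
begin

lemma Lam_subset: "k < d \<Longrightarrow> Lam k \<subseteq> {1..N}"
  using partition unfolding is_partition_def by blast

lemma finite_Lam: "k < d \<Longrightarrow> finite (Lam k)"
  using Lam_subset finite_subset by blast

lemma card_Lam_pos: "k < d \<Longrightarrow> card (Lam k) > 0"
  using partition finite_Lam unfolding is_partition_def by (simp add: card_gt_0_iff)

lemma Lam_disjoint: "k < d \<Longrightarrow> l < d \<Longrightarrow> k \<noteq> l \<Longrightarrow> Lam k \<inter> Lam l = {}"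
  using partition unfolding is_partition_def by blast

lemma sum_card_Lam: "(\<Sum>k<d. card (Lam k)) = N"
proof -
  have "card (\<Union>k<d. Lam k) = (\<Sum>k<d. card (Lam k))"
    by (rule card_UN_disjoint) (auto simp: finite_Lam Lam_disjoint)
  moreover have "(\<Union>k<d. Lam k) = {1..N}"
    using partition unfolding is_partition_def by blast
  ultimately show ?thesis
    by simp
qed

lemma N_pos: "N > 0"
  using member_le_sum[of 0 "{..<d}" "\<lambda>k. card (Lam k)"] card_Lam_pos[of 0] d_pos
  by (simp add: sum_card_Lam)

text \<open>States are encoded by occupation numbers: j k counts the spins equal to 1 in class k.\<close>
definition occupations :: "(nat \<Rightarrow> nat) set" where
  "occupations = PiE {..<d} (\<lambda>k. {..card (Lam k)})"

definition magnetisation :: "(nat \<Rightarrow> nat) \<Rightarrow> nat \<Rightarrow> real" where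
  "magnetisation j k =
     (if k < d then (2 * real (j k) - real (card (Lam k))) / real (card (Lam k)) else 0)"

definition occupation :: "(nat \<Rightarrow> real) \<Rightarrow> nat \<Rightarrow> nat" where
  "occupation x k = nat \<lfloor>real (card (Lam k)) * (1 + x k) / 2\<rfloor>"

lemma finite_occupations: "finite occupations"
  unfolding occupations_def by (intro finite_PiE) auto

lemma occupations_le: "j \<in> occupations \<Longrightarrow> k < d \<Longrightarrow> j k \<le> card (Lam k)"
  unfolding occupations_def by auto

lemma occupations_update:
  "j \<in> occupations \<Longrightarrow> k < d \<Longrightarrow> v \<le> card (Lam k) \<Longrightarrow> j(k := v) \<in> occupations"
  unfolding occupations_def by (auto simp: PiE_iff extensional_def)

lemma occupation_magnetisation: "k < d \<Longrightarrow> occupation (magnetisation j) k = j k"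
  unfolding occupation_def magnetisation_def using card_Lam_pos[of k] by (simp add: field_simps)

lemma magnetisation_eqI: "(\<And>k. k < d \<Longrightarrow> j k = j' k) \<Longrightarrow> magnetisation j = magnetisation j'"
  unfolding magnetisation_def by auto

lemma inj_on_magnetisation: "inj_on magnetisation occupations"
proof
  fix j j'
  assume "j \<in> occupations" "j' \<in> occupations" and eq: "magnetisation j = magnetisation j'"
  show "j = j'"
  proof
    fix k
    show "j k = j' k"
    proof (cases "k < d")
      case True
      then show ?thesis
        using occupation_magnetisation[of k j] occupation_magnetisation[of k j'] eq by simp
    next
      case False
      then show ?thesis
        using \<open>j \<in> occupations\<close> \<open>j' \<in> occupations\<close> unfolding occupations_def PiE_def extensional_def
        by auto
    qed
  qed
qed

lemma gamma_eq_magnetisation: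
  assumes "\<forall>i\<in>{1..N}. \<sigma> i = -1 \<or> \<sigma> i = 1"
  shows "gamma d Lam \<sigma> = magnetisation (\<lambda>k\<in>{..<d}. card {i\<in>Lam k. \<sigma> i = 1})"
proof
  fix k
  show "gamma d Lam \<sigma> k = magnetisation (\<lambda>k\<in>{..<d}. card {i\<in>Lam k. \<sigma> i = 1}) k"
  proof (cases "k < d")
    case True
    then have "(\<Sum>i\<in>Lam k. \<sigma> i) = 2 * real (card {i\<in>Lam k. \<sigma> i = 1}) - real (card (Lam k))"
      using Lam_subset[OF True] assms by (intro sum_plus_minus_one finite_Lam) auto
    then show ?thesis
      unfolding gamma_def magnetisation_def using True by simp
  qed (simp add: gamma_def magnetisation_def)
qed

lemma magnetisation_in_Gamma:
  assumes "j \<in> occupations"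
  shows "magnetisation j \<in> Gamma N d Lam"
proof -
  have "\<exists>B. B \<subseteq> Lam k \<and> card B = j k" if "k < d" for k
    using obtain_subset_with_card_n[OF occupations_le[OF assms that]] by metis
  then obtain B where B: "\<And>k. k < d \<Longrightarrow> B k \<subseteq> Lam k \<and> card (B k) = j k"
    by metis
  define \<sigma> where "\<sigma> i = (if i \<in> (\<Union>k<d. B k) then 1 else (-1::real))" for i
  have ones: "{i\<in>Lam k. \<sigma> i = 1} = B k" if "k < d" for k
  proof -
    have "i \<in> B k" if "i \<in> Lam k" "l < d" "i \<in> B l" for i l
      using B[of l] Lam_disjoint[of k l] \<open>k < d\<close> that by (cases "l = k") auto
    then show ?thesis
      using B[OF \<open>k < d\<close>] \<open>k < d\<close> unfolding \<sigma>_def by auto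
  qed
  have "magnetisation j = magnetisation (\<lambda>k\<in>{..<d}. card {i\<in>Lam k. \<sigma> i = 1})"
    using B ones by (intro magnetisation_eqI) simp
  also have "\<dots> = gamma d Lam \<sigma>"
    by (rule gamma_eq_magnetisation[symmetric]) (simp add: \<sigma>_def)
  finally have "magnetisation j = gamma d Lam \<sigma>" .
  moreover have "\<forall>i\<in>{1..N}. \<sigma> i = -1 \<or> \<sigma> i = 1"
    unfolding \<sigma>_def by auto
  ultimately show ?thesis
    unfolding Defs.Gamma_def by blast
qed

lemma Gamma_eq: "Gamma N d Lam = magnetisation ` occupations"
proof
  show "Gamma N d Lam \<subseteq> magnetisation ` occupations"
  proof
    fix x
    assume "x \<in> Gamma N d Lam"
    then obtain \<sigma> where \<sigma>: "\<forall>i\<in>{1..N}. \<sigma> i = -1 \<or> \<sigma> i = 1" and "x = gamma d Lam \<sigma>"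
      unfolding Defs.Gamma_def by blast
    moreover have "(\<lambda>k\<in>{..<d}. card {i\<in>Lam k. \<sigma> i = 1}) \<in> occupations"
      unfolding occupations_def by (auto intro!: card_mono finite_Lam)
    ultimately show "x \<in> magnetisation ` occupations"
      using gamma_eq_magnetisation[OF \<sigma>] by blast
  qed
qed (auto intro: magnetisation_in_Gamma)

lemma finite_Gamma: "finite (Gamma N d Lam)"
  unfolding Gamma_eq using finite_occupations by simp

lemma QN_eq: "QN N d Lam x = (1/2) ^ N * (\<Prod>k<d. real (card (Lam k) choose occupation x k))"
  unfolding QN_def occupation_def ..

lemma QN_magnetisation:
  "QN N d Lam (magnetisation j) = (1/2) ^ N * (\<Prod>k<d. real (card (Lam k) choose j k))"
  unfolding QN_eq by (simp add: occupation_magnetisation)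

lemma sum_QN: "(\<Sum>x\<in>Gamma N d Lam. QN N d Lam x) = 1"
proof -
  have "(\<Sum>x\<in>Gamma N d Lam. QN N d Lam x) = (\<Sum>j\<in>occupations. QN N d Lam (magnetisation j))"
    unfolding Gamma_eq by (rule sum.reindex[OF inj_on_magnetisation, unfolded comp_def])
  also have "\<dots> = (1/2) ^ N * (\<Prod>k<d. \<Sum>i\<le>card (Lam k). real (card (Lam k) choose i))"
    unfolding QN_magnetisation occupations_def sum_distrib_left[symmetric]
    by (subst prod_sum_PiE) auto
  also have "\<dots> = (1/2) ^ N * (\<Prod>k<d. 2 ^ card (Lam k))"
    by (simp flip: of_nat_sum add: choose_row_sum)
  also have "\<dots> = 1"
    by (simp add: power_sum sum_card_Lam power_one_over flip: power_sum)
  finally show ?thesis .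
qed

definition flip_up :: "nat \<Rightarrow> (nat \<Rightarrow> real) \<Rightarrow> nat \<Rightarrow> real" where
  "flip_up k x = x(k := x k + 2 / real (card (Lam k)))"

definition flip_down :: "nat \<Rightarrow> (nat \<Rightarrow> real) \<Rightarrow> nat \<Rightarrow> real" where
  "flip_down k x = x(k := x k - 2 / real (card (Lam k)))"

definition rate_up :: "nat \<Rightarrow> (nat \<Rightarrow> real) \<Rightarrow> real" where
  "rate_up k x = real (card (Lam k)) / real N * (1 - x k) / 2"

definition rate_down :: "nat \<Rightarrow> (nat \<Rightarrow> real) \<Rightarrow> real" where
  "rate_down k x = real (card (Lam k)) / real N * (1 + x k) / 2"

lemma lumped_trans_eq:
  "lumped_trans N d Lam x y =
     (\<Sum>k<d. (if y = flip_down k x then rate_down k x else 0) + (if y = flip_up k x then rate_up k x else 0))"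
  unfolding lumped_trans_def
proof (intro sum.cong refl)
  fix k
  have "x k + (-1) * 2 / real (card (Lam k)) = x k - 2 / real (card (Lam k))"
    and "1 - (-1) * x k = 1 + x k"
    by simp_all
  then show "(\<Sum>s\<in>{-1, 1}. if y = x(k := x k + s * 2 / real (card (Lam k)))
      then real (card (Lam k)) / real N * (1 - s * x k) / 2 else 0)
    = (if y = flip_down k x then rate_down k x else 0) + (if y = flip_up k x then rate_up k x else 0)"
    unfolding flip_up_def flip_down_def rate_up_def rate_down_def by (subst sum.insert) auto
qed

lemma flip_up_eq_iff: "y = flip_up k x \<longleftrightarrow> x = flip_down k y"
  unfolding flip_up_def flip_down_def by auto

lemma flip_up_magnetisation:
  "k < d \<Longrightarrow> flip_up k (magnetisation j) = magnetisation (j(k := Suc (j k)))"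
  unfolding flip_up_def magnetisation_def using card_Lam_pos[of k] by (auto simp: field_simps)

lemma flip_down_magnetisation:
  "k < d \<Longrightarrow> j k \<ge> 1 \<Longrightarrow> flip_down k (magnetisation j) = magnetisation (j(k := j k - 1))"
  unfolding flip_down_def magnetisation_def using card_Lam_pos[of k] by (auto simp: field_simps of_nat_diff)

lemma rate_up_magnetisation:
  "k < d \<Longrightarrow> rate_up k (magnetisation j) = (real (card (Lam k)) - real (j k)) / real N"
  unfolding rate_up_def magnetisation_def using card_Lam_pos[of k] N_pos by (simp add: field_simps)

lemma rate_down_magnetisation: "k < d \<Longrightarrow> rate_down k (magnetisation j) = real (j k) / real N"
  unfolding rate_down_def magnetisation_def using card_Lam_pos[of k] N_pos by (simp add: field_simps)

lemma rate_up_nonneg: "x \<in> Gamma N d Lam \<Longrightarrow> k < d \<Longrightarrow> rate_up k x \<ge> 0"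
  unfolding Gamma_eq by (auto simp: rate_up_magnetisation occupations_le)

lemma rate_down_nonneg: "x \<in> Gamma N d Lam \<Longrightarrow> k < d \<Longrightarrow> rate_down k x \<ge> 0"
  unfolding Gamma_eq by (auto simp: rate_down_magnetisation)

lemma flip_up_in_Gamma:
  assumes "x \<in> Gamma N d Lam" "k < d" "rate_up k x > 0"
  shows "flip_up k x \<in> Gamma N d Lam"
proof -
  obtain j where j: "j \<in> occupations" "x = magnetisation j"
    using assms(1) unfolding Gamma_eq by blast
  then have "j k < card (Lam k)"
    using assms(3) rate_up_magnetisation[OF assms(2)] N_pos by (simp add: zero_less_divide_iff)
  then show ?thesis
    unfolding j(2) flip_up_magnetisation[OF assms(2)] Gamma_eq
    using occupations_update[OF j(1) assms(2)] by simp
qed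

lemma flip_down_in_Gamma:
  assumes "x \<in> Gamma N d Lam" "k < d" "rate_down k x > 0"
  shows "flip_down k x \<in> Gamma N d Lam"
proof -
  obtain j where j: "j \<in> occupations" "x = magnetisation j"
    using assms(1) unfolding Gamma_eq by blast
  then have "j k \<ge> 1"
    using assms(3) rate_down_magnetisation[OF assms(2)] N_pos by (simp add: zero_less_divide_iff)
  then show ?thesis
    unfolding j(2) flip_down_magnetisation[of k j, OF assms(2) \<open>j k \<ge> 1\<close>] Gamma_eq
    using occupations_update[OF j(1) assms(2)] occupations_le[OF j(1) assms(2)] by simp
qed

lemma lumped_trans_nonneg: "x \<in> Gamma N d Lam \<Longrightarrow> lumped_trans N d Lam x y \<ge> 0"
  unfolding lumped_trans_eq by (auto intro!: sum_nonneg simp: rate_up_nonneg rate_down_nonneg)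

lemma lumped_trans_row_sum:
  assumes "x \<in> Gamma N d Lam"
  shows "(\<Sum>y\<in>Gamma N d Lam. lumped_trans N d Lam x y) = 1"
proof -
  have up: "(if flip_up k x \<in> Gamma N d Lam then rate_up k x else 0) = rate_up k x" if "k < d" for k
    using flip_up_in_Gamma[OF assms that] rate_up_nonneg[OF assms that] by (auto simp: less_le)
  have down: "(if flip_down k x \<in> Gamma N d Lam then rate_down k x else 0) = rate_down k x" if "k < d" for k
    using flip_down_in_Gamma[OF assms that] rate_down_nonneg[OF assms that] by (auto simp: less_le)
  have "(\<Sum>y\<in>Gamma N d Lam. lumped_trans N d Lam x y)
      = (\<Sum>k<d. (if flip_down k x \<in> Gamma N d Lam then rate_down k x else 0)
          + (if flip_up k x \<in> Gamma N d Lam then rate_up k x else 0))"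
    unfolding lumped_trans_eq by (subst sum.swap) (simp add: sum.distrib finite_Gamma)
  also have "\<dots> = (\<Sum>k<d. rate_down k x + rate_up k x)"
    using up down by simp
  also have "\<dots> = (\<Sum>k<d. real (card (Lam k)) / real N)"
    using N_pos by (intro sum.cong refl) (simp add: rate_up_def rate_down_def field_simps)
  also have "\<dots> = 1"
    using N_pos by (simp add: sum_card_Lam flip: sum_divide_distrib of_nat_sum)
  finally show ?thesis .
qed

lemma QN_magnetisation_split:
  assumes "k < d"
  shows "QN N d Lam (magnetisation j) = (1/2) ^ N * real (card (Lam k) choose j k)
    * (\<Prod>l\<in>{..<d}-{k}. real (card (Lam l) choose j l))"
  unfolding QN_magnetisation using assms by (subst prod.remove[of _ k]) auto

text \<open>No bound on j k is needed: for j k = |Lambda_k| both sides vanish.\<close>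
lemma detailed_balance_flip_up:
  assumes "k < d"
  shows "QN N d Lam (magnetisation j) * rate_up k (magnetisation j)
    = QN N d Lam (magnetisation (j(k := Suc (j k)))) * rate_down k (magnetisation (j(k := Suc (j k))))"
proof -
  define R where "R = (\<Prod>l\<in>{..<d}-{k}. real (card (Lam l) choose j l))"
  have "(\<Prod>l\<in>{..<d}-{k}. real (card (Lam l) choose (j(k := Suc (j k))) l)) = R"
    unfolding R_def by (intro prod.cong) auto
  then show ?thesis
    unfolding QN_magnetisation_split[OF assms] rate_up_magnetisation[OF assms]
      rate_down_magnetisation[OF assms] R_def[symmetric]
    using binomial_Suc_balance[of "card (Lam k)" "j k"] by simp
qed

lemma detailed_balance_term:
  assumes "x \<in> Gamma N d Lam" "k < d"
  shows "QN N d Lam x * (if y = flip_up k x then rate_up k x else 0)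
    = QN N d Lam y * (if x = flip_down k y then rate_down k y else 0)"
proof (cases "y = flip_up k x")
  case True
  obtain j where "x = magnetisation j"
    using assms(1) unfolding Gamma_eq by blast
  then show ?thesis
    using True detailed_balance_flip_up[OF assms(2), of j]
    by (simp add: flip_up_eq_iff[symmetric] flip_up_magnetisation[OF assms(2)])
next
  case False
  then show ?thesis
    by (simp add: flip_up_eq_iff)
qed

lemma detailed_balance:
  assumes "x \<in> Gamma N d Lam" "y \<in> Gamma N d Lam"
  shows "QN N d Lam x * lumped_trans N d Lam x y = QN N d Lam y * lumped_trans N d Lam y x"
  unfolding lumped_trans_eq sum_distrib_left distrib_left
  using detailed_balance_term[OF assms(1)] detailed_balance_term[OF assms(2)]
  by (intro sum.cong refl) (simp add: add.commute)

lemma QN_stationary: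
  assumes "y \<in> Gamma N d Lam"
  shows "(\<Sum>x\<in>Gamma N d Lam. QN N d Lam x * lumped_trans N d Lam x y) = QN N d Lam y"
proof -
  have "(\<Sum>x\<in>Gamma N d Lam. QN N d Lam x * lumped_trans N d Lam x y)
      = QN N d Lam y * (\<Sum>x\<in>Gamma N d Lam. lumped_trans N d Lam y x)"
    unfolding sum_distrib_left using assms by (intro sum.cong refl detailed_balance)
  then show ?thesis
    using lumped_trans_row_sum[OF assms] by simp
qed

sublocale stationary_markov_chain "Gamma N d Lam" "lumped_trans N d Lam" "QN N d Lam"
  by unfold_locales
    (simp_all add: finite_Gamma lumped_trans_nonneg lumped_trans_row_sum sum_QN QN_stationary)

lemma rate_up_le_lumped_trans:
  assumes "x \<in> Gamma N d Lam" "k < d"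
  shows "rate_up k x \<le> lumped_trans N d Lam x (flip_up k x)"
proof -
  have "rate_up k x \<le> (if flip_up k x = flip_down k x then rate_down k x else 0)
      + (if flip_up k x = flip_up k x then rate_up k x else 0)"
    using rate_down_nonneg[OF assms] by simp
  also have "\<dots> \<le> lumped_trans N d Lam x (flip_up k x)"
    unfolding lumped_trans_eq using assms
    by (intro member_le_sum) (auto simp: rate_up_nonneg rate_down_nonneg)
  finally show ?thesis .
qed

lemma rate_down_le_lumped_trans:
  assumes "x \<in> Gamma N d Lam" "k < d"
  shows "rate_down k x \<le> lumped_trans N d Lam x (flip_down k x)"
proof -
  have "rate_down k x \<le> (if flip_down k x = flip_down k x then rate_down k x else 0)
      + (if flip_down k x = flip_up k x then rate_up k x else 0)"
    using rate_up_nonneg[OF assms] by simp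
  also have "\<dots> \<le> lumped_trans N d Lam x (flip_down k x)"
    unfolding lumped_trans_eq using assms
    by (intro member_le_sum) (auto simp: rate_up_nonneg rate_down_nonneg)
  finally show ?thesis .
qed

definition occupation_distance :: "(nat \<Rightarrow> real) \<Rightarrow> (nat \<Rightarrow> real) \<Rightarrow> nat" where
  "occupation_distance z x = (\<Sum>k<d. nat \<bar>int (occupation x k) - int (occupation z k)\<bar>)"

lemma occupation_distance_magnetisation:
  "occupation_distance (magnetisation jz) (magnetisation j) = (\<Sum>k<d. nat \<bar>int (j k) - int (jz k)\<bar>)"
  unfolding occupation_distance_def by (simp add: occupation_magnetisation)

lemma occupation_distance_update_less:
  assumes "k < d" and closer: "\<bar>int v - int (jz k)\<bar> < \<bar>int (j k) - int (jz k)\<bar>"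
  shows "occupation_distance (magnetisation jz) (magnetisation (j(k := v)))
    < occupation_distance (magnetisation jz) (magnetisation j)"
  unfolding occupation_distance_magnetisation
proof (rule sum_strict_mono_ex1)
  show "\<forall>l\<in>{..<d}. nat \<bar>int ((j(k := v)) l) - int (jz l)\<bar> \<le> nat \<bar>int (j l) - int (jz l)\<bar>"
    using closer by auto
  show "\<exists>l\<in>{..<d}. nat \<bar>int ((j(k := v)) l) - int (jz l)\<bar> < nat \<bar>int (j l) - int (jz l)\<bar>"
    using closer \<open>k < d\<close> by (intro bexI[of _ k]) auto
qed simp

lemma lumped_chain_descent:
  assumes "z \<in> Gamma N d Lam" "x \<in> Gamma N d Lam" "x \<noteq> z"
  shows "\<exists>y\<in>Gamma N d Lam. lumped_trans N d Lam x y > 0 \<and> occupation_distance z y < occupation_distance z x"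
proof -
  obtain j where j: "j \<in> occupations" "x = magnetisation j"
    using assms(2) unfolding Gamma_eq by blast
  obtain jz where jz: "jz \<in> occupations" "z = magnetisation jz"
    using assms(1) unfolding Gamma_eq by blast
  obtain k where "k < d" "j k \<noteq> jz k"
    using assms(3) magnetisation_eqI[of j jz] unfolding j(2) jz(2) by blast
  show ?thesis
  proof (cases "j k < jz k")
    case True
    then have "rate_up k x > 0"
      unfolding j(2) rate_up_magnetisation[OF \<open>k < d\<close>] using occupations_le[OF jz(1) \<open>k < d\<close>] N_pos
      by simp
    moreover have "occupation_distance z (flip_up k x) < occupation_distance z x"
      unfolding j(2) jz(2) flip_up_magnetisation[OF \<open>k < d\<close>]
      using True by (intro occupation_distance_update_less \<open>k < d\<close>) simp
    ultimately show ?thesis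
      using flip_up_in_Gamma[OF assms(2) \<open>k < d\<close>] rate_up_le_lumped_trans[OF assms(2) \<open>k < d\<close>]
      by force
  next
    case False
    then have "j k \<ge> 1" "jz k < j k"
      using \<open>j k \<noteq> jz k\<close> by simp_all
    then have "rate_down k x > 0"
      unfolding j(2) rate_down_magnetisation[OF \<open>k < d\<close>] using N_pos by simp
    moreover have "occupation_distance z (flip_down k x) < occupation_distance z x"
      unfolding j(2) jz(2) flip_down_magnetisation[of k j, OF \<open>k < d\<close> \<open>j k \<ge> 1\<close>]
      using \<open>jz k < j k\<close> by (intro occupation_distance_update_less \<open>k < d\<close>) simp
    ultimately show ?thesis
      using flip_down_in_Gamma[OF assms(2) \<open>k < d\<close>] rate_down_le_lumped_trans[OF assms(2) \<open>k < d\<close>]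
      by force
  qed
qed

lemma QN_maximum:
  assumes "z \<in> Gamma N d Lam" and max: "\<forall>x\<in>Gamma N d Lam. QN N d Lam x \<le> QN N d Lam z"
  shows "QN N d Lam z = (1/2) ^ N * (\<Prod>k<d. real (card (Lam k) choose (card (Lam k) div 2)))"
proof (rule antisym)
  show "QN N d Lam z \<le> (1/2) ^ N * (\<Prod>k<d. real (card (Lam k) choose (card (Lam k) div 2)))"
    unfolding QN_eq by (intro mult_left_mono prod_mono) (auto simp: binomial_maximum)
  define jc where "jc = (\<lambda>k\<in>{..<d}. card (Lam k) div 2)"
  have "jc \<in> occupations"
    unfolding occupations_def jc_def by auto
  moreover have "QN N d Lam (magnetisation jc)
      = (1/2) ^ N * (\<Prod>k<d. real (card (Lam k) choose (card (Lam k) div 2)))"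
    unfolding QN_magnetisation jc_def by simp
  ultimately show "(1/2) ^ N * (\<Prod>k<d. real (card (Lam k) choose (card (Lam k) div 2))) \<le> QN N d Lam z"
    using max magnetisation_in_Gamma by metis
qed

theorem expected_return_time_at_maximum:
  assumes "z \<in> Gamma N d Lam" and max: "\<forall>x\<in>Gamma N d Lam. QN N d Lam x \<le> QN N d Lam z"
  shows "expected_hit (lumped_trans N d Lam) (Gamma N d Lam) {z} z
    = ennreal (\<Prod>k<d. 2 ^ card (Lam k) / real (card (Lam k) choose (card (Lam k) div 2)))"
proof -
  have "(1/2 :: real) ^ N = (\<Prod>k<d. (1/2) ^ card (Lam k))"
    unfolding sum_card_Lam[symmetric] by (rule power_sum)
  then have Qz: "QN N d Lam z = (\<Prod>k<d. real (card (Lam k) choose (card (Lam k) div 2)) / 2 ^ card (Lam k))"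
    unfolding QN_maximum[OF assms] by (simp add: power_one_over flip: prod.distrib)
  then have "QN N d Lam z > 0"
    by (simp add: prod_pos)
  then have "expected_hit (lumped_trans N d Lam) (Gamma N d Lam) {z} z = ennreal (1 / QN N d Lam z)"
    using kac_formula[OF assms(1)] accessible_by_descent[OF lumped_chain_descent[OF assms(1)]] by blast
  then show ?thesis
    unfolding Qz by (simp add: prod_dividef flip: prod_inversef)
qed

end

theorem lemma2p6:
  shows "\<exists>C::real. \<forall>N d Lam z.
     d \<ge> 1 \<and> is_partition N d Lam \<and> z \<in> Gamma N d Lam \<and>
     (\<forall>x\<in>Gamma N d Lam. QN N d Lam x \<le> QN N d Lam z) \<longrightarrow>
     (\<exists>\<epsilon>::nat \<Rightarrow> real.
        (\<forall>k<d. \<bar>\<epsilon> k\<bar> \<le> C / real (card (Lam k))) \<and>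
        expected_hit (lumped_trans N d Lam) (Gamma N d Lam) {z} z
          = ennreal (\<Prod>k<d. sqrt (pi / 2 * real (card (Lam k))) * (1 + \<epsilon> k)))"
proof (intro exI[of _ 1] allI impI)
  fix N d Lam z
  assume H: "d \<ge> 1 \<and> is_partition N d Lam \<and> z \<in> Gamma N d Lam \<and>
     (\<forall>x\<in>Gamma N d Lam. QN N d Lam x \<le> QN N d Lam z)"
  then interpret lumped_chain N d Lam
    by unfold_locales auto
  have "\<forall>k\<in>{..<d}. \<exists>e. \<bar>e\<bar> \<le> 1 / real (card (Lam k)) \<and>
      2 ^ card (Lam k) / real (card (Lam k) choose (card (Lam k) div 2))
        = sqrt (pi / 2 * real (card (Lam k))) * (1 + e)"
    using card_Lam_pos by (intro ballI two_power_div_central_binomial_asymp) (simp add: Suc_le_eq)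
  then obtain \<epsilon> where "\<And>k. k < d \<Longrightarrow> \<bar>\<epsilon> k\<bar> \<le> 1 / real (card (Lam k)) \<and>
      2 ^ card (Lam k) / real (card (Lam k) choose (card (Lam k) div 2))
        = sqrt (pi / 2 * real (card (Lam k))) * (1 + \<epsilon> k)"
    by (metis lessThan_iff)
  then show "\<exists>\<epsilon>. (\<forall>k<d. \<bar>\<epsilon> k\<bar> \<le> 1 / real (card (Lam k))) \<and>
      expected_hit (lumped_trans N d Lam) (Gamma N d Lam) {z} z
        = ennreal (\<Prod>k<d. sqrt (pi / 2 * real (card (Lam k))) * (1 + \<epsilon> k))"
    using expected_return_time_at_maximum H by (intro exI[of _ \<epsilon>]) (auto intro!: prod.cong)
qed

end
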